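(* Let $i\in\mathbb Z^{\geq 0}$ and $j\in\mathbb Z$. Then $$R_{i,j}=R_{i+1,F(i+1)+j}\cup R_{i+2,j},$$ and the union is disjoint.
   Context: $\varphi=\frac{1+\sqrt5}{2}$ is the golden ratio; $a(n)=\lfloor n\varphi\rfloor$ and $b(n)=\lfloor n\varphi^2\rfloor$ for $n\in\mathbb N=\{1,2,\dots\}$ are the lower and upper Wythoff sequences. $F$ is the Fibonacci sequence with $F(0)=0$, $F(1)=F(2)=1$, $F(n)=F(n-1)+F(n-2)$. For $i\in\mathbb Z^{\geq 0}$ and $j\in\mathbb Z$, the sequence $f_{i,j}$ is defined by $f_{i,j}(n)=F(i+1)a(n)+F(i)n-j$ for $n\in\mathbb N$, and $R_{i,j}=\{f_{i,j}(n)\mid n\in\mathbb N\}$ is its range. *)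

theory Defs
  imports Complex_Main "HOL-Number_Theory.Fib"
begin

definition phi :: real where "phi = (1 + sqrt 5) / 2"

definition wa :: "nat \<Rightarrow> int" where "wa n = \<lfloor>real n * phi\<rfloor>"

definition f_ij :: "nat \<Rightarrow> int \<Rightarrow> nat \<Rightarrow> int" where
  "f_ij i j n = int (fib (i + 1)) * wa n + int (fib i) * int n - j"

definition R_ij :: "nat \<Rightarrow> int \<Rightarrow> int set" where
  "R_ij i j = f_ij i j ` {1..}"

end

(* Since phi is irrational and 1/phi + 1/phi^2 = 1, Beatty's theorem says that the lower and
   upper Wythoff sequences a and b = a + id partition the positive integers. The identities
   a(a(n)) = b(n) - 1 and a(b(n)) = a(n) + b(n), together with F(i+2) = F(i+1) + F(i), give
   f_{i,j} o a = f_{i+1,F(i+1)+j} and f_{i,j} o b = f_{i+2,j}. As f_{i,j} is strictly increasing,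
   it maps the partition of the positive integers to a partition of R_{i,j}. *)

theory Submission
  imports Defs
begin

lemma irrational_mult_notin_Ints:
  fixes \<alpha> q :: real
  assumes "\<alpha> \<notin> \<rat>" "q \<in> \<rat>" "q \<noteq> 0"
  shows "q * \<alpha> \<notin> \<int>"
proof
  assume "q * \<alpha> \<in> \<int>"
  then have "q * \<alpha> / q \<in> \<rat>" using assms(2) Ints_subset_Rats Rats_divide by blast
  moreover have "q * \<alpha> / q = \<alpha>" using assms(3) by simp
  ultimately show False using assms(1) by simp
qed

lemma of_int_floor_less_if_notin_Ints:
  fixes x :: real
  assumes "x \<notin> \<int>"
  shows "of_int \<lfloor>x\<rfloor> < x"
proof -
  have "of_int \<lfloor>x\<rfloor> \<noteq> x" using assms Ints_of_int by metis
  then show ?thesis using of_int_floor_le[of x] by linarith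
qed

lemma Beatty_complement_irrational:
  fixes \<alpha> \<beta> :: real
  assumes "1 / \<alpha> + 1 / \<beta> = 1" "\<alpha> \<notin> \<rat>"
  shows "\<beta> \<notin> \<rat>"
proof
  assume "\<beta> \<in> \<rat>"
  then have "1 / (1 - 1 / \<beta>) \<in> \<rat>" by simp
  moreover have "1 - 1 / \<beta> = 1 / \<alpha>" using assms(1) by simp
  ultimately show False using assms(2) by simp
qed

lemma divide_add_divide_eq_self:
  fixes \<alpha> \<beta> x :: real
  assumes "1 / \<alpha> + 1 / \<beta> = 1"
  shows "x / \<alpha> + x / \<beta> = x"
proof -
  have "x / \<alpha> + x / \<beta> = x * (1 / \<alpha> + 1 / \<beta>)" by (simp add: algebra_simps)
  with assms show ?thesis by simp
qed

lemma Beatty_disjoint: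
  fixes \<alpha> \<beta> :: real
  assumes "\<alpha> > 0" "\<beta> > 0" "1 / \<alpha> + 1 / \<beta> = 1" "\<alpha> \<notin> \<rat>" "n \<ge> 1" "k \<ge> 1"
  shows "\<lfloor>real n * \<alpha>\<rfloor> \<noteq> \<lfloor>real k * \<beta>\<rfloor>"
proof
  assume "\<lfloor>real n * \<alpha>\<rfloor> = \<lfloor>real k * \<beta>\<rfloor>"
  then obtain m where m_n: "\<lfloor>real n * \<alpha>\<rfloor> = m" and m_k: "\<lfloor>real k * \<beta>\<rfloor> = m" by simp
  have "real n * \<alpha> \<notin> \<int>" "real k * \<beta> \<notin> \<int>"
    using irrational_mult_notin_Ints Beatty_complement_irrational assms(3-6) by auto
  then have "of_int m < real n * \<alpha>" "of_int m < real k * \<beta>"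
    using of_int_floor_less_if_notin_Ints m_n m_k by fastforce+
  moreover have "real n * \<alpha> < of_int m + 1" "real k * \<beta> < of_int m + 1"
    using real_of_int_floor_add_one_gt[of "real n * \<alpha>"] real_of_int_floor_add_one_gt[of "real k * \<beta>"]
    by (simp_all add: m_n m_k)
  ultimately have "of_int m / \<alpha> < real n" "real n < (of_int m + 1) / \<alpha>"
    and "of_int m / \<beta> < real k" "real k < (of_int m + 1) / \<beta>"
    using assms(1,2) by (simp_all add: field_simps)
  then have "of_int m < real n + real k" "real n + real k < of_int m + 1"
    using divide_add_divide_eq_self[OF assms(3), of "of_int m"]
      divide_add_divide_eq_self[OF assms(3), of "of_int m + 1"] by linarith+
  then have "of_int m < real_of_int (int n + int k)" "real_of_int (int n + int k) < of_int (m + 1)"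
    by simp_all
  then show False unfolding of_int_less_iff by linarith
qed

lemma of_int_floor_divide_less_if_irrational:
  fixes \<alpha> q :: real
  assumes "\<alpha> \<notin> \<rat>" "q \<in> \<rat>" "q \<noteq> 0"
  shows "of_int \<lfloor>q / \<alpha>\<rfloor> < q / \<alpha>"
proof -
  have "inverse \<alpha> \<notin> \<rat>" using assms(1) Rats_inverse inverse_inverse_eq by metis
  then have "q * inverse \<alpha> \<notin> \<int>" using assms(2,3) by (rule irrational_mult_notin_Ints)
  then show ?thesis unfolding divide_inverse by (rule of_int_floor_less_if_notin_Ints)
qed

lemma Beatty_floor_divide_sum:
  fixes \<alpha> \<beta> :: real
  assumes "\<alpha> > 0" "\<beta> > 0" "1 / \<alpha> + 1 / \<beta> = 1" "\<alpha> \<notin> \<rat>" "m \<ge> 0"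
  shows "\<lfloor>(of_int m + 1) / \<alpha>\<rfloor> + \<lfloor>(of_int m + 1) / \<beta>\<rfloor> = m"
proof -
  define n where "n = \<lfloor>(of_int m + 1) / \<alpha>\<rfloor>"
  define k where "k = \<lfloor>(of_int m + 1) / \<beta>\<rfloor>"
  have "\<beta> \<notin> \<rat>" "of_int m + 1 \<noteq> (0 :: real)"
    using assms(3-5) Beatty_complement_irrational by auto
  then have "of_int n < (of_int m + 1) / \<alpha>" "of_int k < (of_int m + 1) / \<beta>"
    unfolding n_def k_def using assms(4) of_int_floor_divide_less_if_irrational by simp_all
  moreover have "(of_int m + 1) / \<alpha> < of_int n + 1" "(of_int m + 1) / \<beta> < of_int k + 1"
    unfolding n_def k_def by simp_all
  ultimately have "real_of_int (n + k) < of_int (m + 1)" "of_int (m + 1) < real_of_int (n + k + 2)"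
    using divide_add_divide_eq_self[OF assms(3), of "of_int m + 1"] by simp_all
  then show ?thesis unfolding n_def k_def of_int_less_iff by linarith
qed

lemma Beatty_cover:
  fixes \<alpha> \<beta> :: real
  assumes "\<alpha> > 0" "\<beta> > 0" "1 / \<alpha> + 1 / \<beta> = 1" "\<alpha> \<notin> \<rat>" "m \<ge> 1"
  shows "\<exists>n\<ge>1. \<lfloor>real n * \<alpha>\<rfloor> = m \<or> \<lfloor>real n * \<beta>\<rfloor> = m"
proof -
  define n where "n = \<lfloor>(of_int m + 1) / \<alpha>\<rfloor>"
  define k where "k = \<lfloor>(of_int m + 1) / \<beta>\<rfloor>"
  \<comment> \<open>n and k count the terms below m + 1 of the two sequences; as n + k = m, one of the
    sequences has a term in the interval [m, m + 1).\<close>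
  have "n + k = m" unfolding n_def k_def using assms by (intro Beatty_floor_divide_sum) simp_all
  have "n \<ge> 0" "k \<ge> 0"
    unfolding n_def k_def using assms(1,2,5) by simp_all
  have "\<beta> \<notin> \<rat>" "of_int m + 1 \<noteq> (0 :: real)"
    using assms(3-5) Beatty_complement_irrational by auto
  then have "of_int n < (of_int m + 1) / \<alpha>" "of_int k < (of_int m + 1) / \<beta>"
    unfolding n_def k_def using assms(4) of_int_floor_divide_less_if_irrational by simp_all
  then have "real_of_int n * \<alpha> < of_int m + 1" "real_of_int k * \<beta> < of_int m + 1"
    using assms(1,2) by (simp_all add: field_simps)
  moreover have "of_int m \<le> real_of_int n * \<alpha> \<or> of_int m \<le> real_of_int k * \<beta>"
  proof (rule ccontr)
    assume "\<not> ?thesis"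
    then have "real_of_int n < of_int m / \<alpha>" "real_of_int k < of_int m / \<beta>"
      using assms(1,2) by (simp_all add: field_simps)
    then have "real_of_int (n + k) < of_int m"
      using divide_add_divide_eq_self[OF assms(3), of "of_int m"] by simp
    with \<open>n + k = m\<close> show False by simp
  qed
  ultimately have "\<lfloor>real_of_int n * \<alpha>\<rfloor> = m \<or> \<lfloor>real_of_int k * \<beta>\<rfloor> = m"
    by (auto intro: floor_unique)
  then show ?thesis
  proof
    assume "\<lfloor>real_of_int n * \<alpha>\<rfloor> = m"
    moreover from this have "n \<ge> 1" using \<open>n \<ge> 0\<close> assms(5) by (cases "n = 0") auto
    ultimately show ?thesis by (intro exI[of _ "nat n"]) simp
  next
    assume "\<lfloor>real_of_int k * \<beta>\<rfloor> = m"
    moreover from this have "k \<ge> 1" using \<open>k \<ge> 0\<close> assms(5) by (cases "k = 0") auto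
    ultimately show ?thesis by (intro exI[of _ "nat k"]) simp
  qed
qed

lemma Beatty_partition:
  fixes \<alpha> \<beta> :: real
  assumes "\<alpha> > 0" "\<beta> > 0" "1 / \<alpha> + 1 / \<beta> = 1" "\<alpha> \<notin> \<rat>"
  shows "(\<lambda>n. \<lfloor>real n * \<alpha>\<rfloor>) ` {1..} \<union> (\<lambda>n. \<lfloor>real n * \<beta>\<rfloor>) ` {1..} = {1..}"
    and "(\<lambda>n. \<lfloor>real n * \<alpha>\<rfloor>) ` {1..} \<inter> (\<lambda>n. \<lfloor>real n * \<beta>\<rfloor>) ` {1..} = {}"
proof -
  have "1 / \<alpha> < 1" "1 / \<beta> < 1"
    using assms(1-3) by (smt (verit) divide_pos_pos)+
  then have "\<alpha> > 1" "\<beta> > 1"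
    using assms(1,2) by (simp_all add: field_simps)
  then have "\<lfloor>real n * \<alpha>\<rfloor> \<ge> 1" "\<lfloor>real n * \<beta>\<rfloor> \<ge> 1" if "n \<ge> 1" for n
    using that mult_mono[of 1 "real n" 1 \<alpha>] mult_mono[of 1 "real n" 1 \<beta>]
    by (simp_all add: one_le_floor)
  then show "(\<lambda>n. \<lfloor>real n * \<alpha>\<rfloor>) ` {1..} \<union> (\<lambda>n. \<lfloor>real n * \<beta>\<rfloor>) ` {1..} = {1..}"
    using Beatty_cover[OF assms] by fastforce
  show "(\<lambda>n. \<lfloor>real n * \<alpha>\<rfloor>) ` {1..} \<inter> (\<lambda>n. \<lfloor>real n * \<beta>\<rfloor>) ` {1..} = {}"
    using Beatty_disjoint[OF assms] by fastforce
qed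

definition wb :: "nat \<Rightarrow> int" where "wb n = \<lfloor>real n * phi\<^sup>2\<rfloor>"

lemma phi_squared: "phi\<^sup>2 = phi + 1"
  by (simp add: phi_def power2_eq_square field_simps)

lemma phi_gt_1: "phi > 1" and phi_less_2: "phi < 2"
proof -
  have "1 < sqrt 5" "sqrt 5 < 3" by (simp_all add: real_less_rsqrt real_sqrt_less_iff real_less_lsqrt)
  then show "phi > 1" "phi < 2" by (simp_all add: phi_def)
qed

lemma phi_irrational: "phi \<notin> \<rat>"
proof
  assume "phi \<in> \<rat>"
  then obtain p q :: nat where "q \<noteq> 0" "\<bar>phi\<bar> = real p / real q" "coprime p q"
    by (rule Rats_abs_nat_div_natE)
  then have phi_pq: "phi = real p / real q" using phi_gt_1 by simp
  have "real (p\<^sup>2) = real (p * q + q\<^sup>2)"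
  proof -
    have "(real p / real q)\<^sup>2 = real p / real q + 1" using phi_squared phi_pq by simp
    with \<open>q \<noteq> 0\<close> show ?thesis by (simp add: field_simps power2_eq_square)
  qed
  then have pq: "p\<^sup>2 = q * (p + q)" "q\<^sup>2 = p * (p - q)"
    unfolding of_nat_eq_iff by (simp_all add: algebra_simps power2_eq_square diff_mult_distrib2)
  have "is_unit q"
    using \<open>coprime p q\<close> pq(1) by (metis coprime_commute coprime_common_divisor coprime_power_right_iff dvd_refl dvd_triv_left)
  moreover have "is_unit p"
    using \<open>coprime p q\<close> pq(2) by (metis coprime_common_divisor coprime_power_right_iff dvd_refl dvd_triv_left)
  ultimately show False using pq(1) by simp
qed

lemma wb_eq: "wb n = wa n + int n"
  by (simp add: wb_def wa_def phi_squared distrib_left)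

lemma wa_wb_partition: "wa ` {1..} \<union> wb ` {1..} = {1..}" "wa ` {1..} \<inter> wb ` {1..} = {}"
proof -
  have "1 / phi + 1 / phi\<^sup>2 = (phi + 1) / phi\<^sup>2"
    using phi_gt_1 by (simp add: field_simps power2_eq_square)
  then have "1 / phi + 1 / phi\<^sup>2 = 1"
    using phi_gt_1 by (simp add: phi_squared)
  then show "wa ` {1..} \<union> wb ` {1..} = {1..}" "wa ` {1..} \<inter> wb ` {1..} = {}"
    using Beatty_partition[of phi "phi\<^sup>2"] phi_gt_1 phi_irrational
    unfolding wa_def[abs_def] wb_def[abs_def] by simp_all
qed

lemma wa_times_phi:
  "of_int (wa n) * phi = of_int (wa n) + real n - frac (real n * phi) * (phi - 1)"
proof -
  define d where "d = frac (real n * phi)"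
  have "real n * phi = of_int (wa n) + d" by (simp add: d_def frac_def wa_def)
  then have "of_int (wa n) * phi = real n * phi\<^sup>2 - d * phi"
    by (simp add: power2_eq_square algebra_simps)
  also have "\<dots> = of_int (wa n) + real n - d * (phi - 1)"
    using \<open>real n * phi = of_int (wa n) + d\<close> by (simp add: phi_squared algebra_simps)
  finally show ?thesis by (simp add: d_def)
qed

lemma wa_nonneg: "wa n \<ge> 0"
  using phi_gt_1 by (simp add: wa_def)

lemma wa_wa:
  assumes "n \<ge> 1"
  shows "wa (nat (wa n)) = wb n - 1"
proof -
  have "real n * phi \<notin> \<int>"
    using assms irrational_mult_notin_Ints phi_irrational by simp
  then have "0 < frac (real n * phi) * (phi - 1)" "frac (real n * phi) * (phi - 1) < 1"
    using phi_gt_1 phi_less_2 frac_lt_1[of "real n * phi"] mult_strict_mono[of "frac (real n * phi)" 1 "phi - 1" 1]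
    by simp_all
  then have "\<lfloor>of_int (wa n) * phi\<rfloor> = wa n + int n - 1"
    unfolding wa_times_phi by (intro floor_unique) simp_all
  then show ?thesis by (simp add: wa_def[of "nat (wa n)"] wa_nonneg wb_eq)
qed

lemma wa_wb: "wa (nat (wb n)) = wa n + wb n"
proof -
  have "0 \<le> frac (real n * phi) * (2 - phi)" "frac (real n * phi) * (2 - phi) < 1"
    using phi_gt_1 phi_less_2 frac_lt_1[of "real n * phi"] mult_strict_mono[of "frac (real n * phi)" 1 "2 - phi" 1]
    by simp_all
  moreover have "(of_int (wa n) + real n) * phi = of_int (2 * wa n + int n) + frac (real n * phi) * (2 - phi)"
    using wa_times_phi[of n] by (simp add: frac_def wa_def algebra_simps)
  ultimately have "\<lfloor>(of_int (wa n) + real n) * phi\<rfloor> = 2 * wa n + int n"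
    by (intro floor_unique) simp_all
  moreover have "real (nat (wb n)) = of_int (wa n) + real n"
    using wa_nonneg[of n] by (simp add: wb_eq)
  ultimately show ?thesis unfolding wa_def[of "nat (wb n)"] by (simp add: wb_eq)
qed

lemma strict_mono_wa: "strict_mono wa"
proof (rule strict_monoI)
  fix n k :: nat
  assume "n < k"
  then have "real n * phi + 1 < real k * phi"
    using phi_gt_1 mult_right_mono[of "real n + 1" "real k" phi] by (simp add: algebra_simps)
  then show "wa n < wa k" unfolding wa_def by linarith
qed

lemma strict_mono_f_ij: "strict_mono (f_ij i j)"
proof (rule strict_monoI)
  fix n k :: nat
  assume "n < k"
  then have "wa n < wa k" by (rule strict_monoD[OF strict_mono_wa])
  then have "int (fib (i + 1)) * wa n < int (fib (i + 1)) * wa k"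
    using fib_neq_0_nat[of "i + 1"] by simp
  moreover have "int (fib i) * int n \<le> int (fib i) * int k"
    using \<open>n < k\<close> by (simp add: mult_left_mono)
  ultimately show "f_ij i j n < f_ij i j k" unfolding f_ij_def by linarith
qed

lemma f_ij_wa:
  "n \<ge> 1 \<Longrightarrow> f_ij i j (nat (wa n)) = f_ij (i + 1) (int (fib (i + 1)) + j) n"
  by (simp add: f_ij_def wa_wa wb_eq wa_nonneg numeral_2_eq_2 algebra_simps)

lemma f_ij_wb: "f_ij i j (nat (wb n)) = f_ij (i + 2) j n"
  unfolding f_ij_def wa_wb by (simp add: wb_eq wa_nonneg numeral_2_eq_2 algebra_simps)

theorem theorem2p3:
  fixes i :: nat and j :: int
  shows "R_ij i j = R_ij (i + 1) (int (fib (i + 1)) + j) \<union> R_ij (i + 2) j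
         \<and> R_ij (i + 1) (int (fib (i + 1)) + j) \<inter> R_ij (i + 2) j = {}"
proof -
  define g where "g m = f_ij i j (nat m)" for m
  have "nat ` {1..} = {1::nat..}"
    by (auto intro!: image_eqI[where x = "int x" for x])
  then have "R_ij i j = g ` {1..}"
    unfolding R_ij_def g_def by (metis image_image)
  moreover have "R_ij (i + 1) (int (fib (i + 1)) + j) = g ` wa ` {1..}"
    unfolding R_ij_def g_def image_image by (intro image_cong) (simp_all add: f_ij_wa)
  moreover have "R_ij (i + 2) j = g ` wb ` {1..}"
    unfolding R_ij_def g_def image_image by (intro image_cong) (simp_all add: f_ij_wb)
  moreover have "inj_on g {1..}"
  proof (rule inj_onI)
    fix x y :: int
    assume "x \<in> {1..}" "y \<in> {1..}" "g x = g y"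
    have "inj (f_ij i j)" using strict_mono_f_ij by (rule strict_mono_imp_inj_on)
    then have "nat x = nat y" using \<open>g x = g y\<close> unfolding g_def by (rule injD)
    with \<open>x \<in> {1..}\<close> \<open>y \<in> {1..}\<close> show "x = y" by simp
  qed
  ultimately show ?thesis
    using wa_wb_partition inj_on_image_Int[of g "{1..}" "wa ` {1..}" "wb ` {1..}"]
    by (metis image_Un image_empty sup.cobounded1 sup.cobounded2)
qed

end
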